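(* Let $n\in\mathbb{N}$ and $\alpha=(a_1,\dots,a_n)\in PP_n$. Define $\mathrm{T}(\alpha)=(b_1,\dots,b_n)$ recursively by $b_1=a_1$ and, for $2\le i\le n$, $$b_i=\begin{cases} a_i-1 & \text{if } a_i\neq 1 \text{ and } a_i=b_j \text{ for some } 1\le j<i,\\ a_i & \text{otherwise.}\end{cases}$$ Then $\alpha$ is a $1$-Naples (Naples) parking function, i.e. $\alpha\in PF_{n,1}$, if and only if $\mathrm{T}(\alpha)$ is a classical parking function, i.e. $\mathrm{T}(\alpha)\in PF_{n,0}$.
   Context: For $n\in\mathbb{N}$ let $[n]=\{1,\dots,n\}$ and $PP_n=[n]^n$ (parking preferences). For an integer $k\ge 0$, the $k$-Naples parking rule: there are $n$ spots numbered $1,\dots,n$ west to east, initially empty; cars $c_1,\dots,c_n$ arrive in order, car $c_i$ preferring spot $a_i$. If spot $a_i$ is empty, $c_i$ parks there. Otherwise $c_i$ checks spots $a_i-1,\dots,a_i-k$ in this order (skipping those $<1$) and parks in the first empty one; if all are occupied, it drives east and parks in the first empty spot numbered greater than $a_i$, failing to park if none exists. $PF_{n,k}$ is the set of $\alpha\in PP_n$ for which all cars park. $PF_{n,0}=PF_n$ is the set of classical parking functions (equivalently, $\alpha$ whose weakly increasing rearrangement $(\beta_1,\dots,\beta_n)$ satisfies $\beta_i\le i$ for all $i$). *)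

theory Defs
  imports Main
begin

text \<open>Parking preferences of length n: lists over {1..n}; entry i is the preference of car i+1.\<close>
definition PP :: "nat \<Rightarrow> nat list set" where
  "PP n = {\<alpha>. length \<alpha> = n \<and> set \<alpha> \<subseteq> {1..n}}"

text \<open>Spot taken by a car preferring spot a under the k-Naples rule, given the set occ of
  occupied spots, among spots 1..n (None = fails to park).\<close>
definition naples_spot :: "nat \<Rightarrow> nat \<Rightarrow> nat set \<Rightarrow> nat \<Rightarrow> nat option" where
  "naples_spot n k occ a =
     (if a \<notin> occ then Some a
      else case find (\<lambda>s. s \<notin> occ) (map (\<lambda>j. a - j) (filter (\<lambda>j. j < a) [1..<k+1])) of
             Some s \<Rightarrow> Some s
           | None \<Rightarrow> find (\<lambda>s. s \<notin> occ) [a+1..<n+1])"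

fun naples_run :: "nat \<Rightarrow> nat \<Rightarrow> nat list \<Rightarrow> nat set \<Rightarrow> bool" where
  "naples_run n k [] occ = True"
| "naples_run n k (a # as) occ =
     (case naples_spot n k occ a of
        None \<Rightarrow> False
      | Some s \<Rightarrow> naples_run n k as (insert s occ))"

definition PF :: "nat \<Rightarrow> nat \<Rightarrow> nat list set" where
  "PF n k = {\<alpha> \<in> PP n. naples_run n k \<alpha> {}}"

text \<open>The map T, computed left to right; bs holds b_1..b_{i-1}.\<close>
fun T_aux :: "nat list \<Rightarrow> nat list \<Rightarrow> nat list" where
  "T_aux bs [] = bs"
| "T_aux bs (a # as) = T_aux (bs @ [if a \<noteq> 1 \<and> a \<in> set bs then a - 1 else a]) as"

definition T :: "nat list \<Rightarrow> nat list" where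
  "T \<alpha> = T_aux [] \<alpha>"

end

theory Submission
  imports Defs
begin

text \<open>Run a 1-Naples process on \<alpha> and a classical one on T(\<alpha>) side by side. Invariant: every
  occupied spot is either one of the b_j seen so far, or was reached by driving east and so has
  its left neighbour occupied. Under this invariant car i, preferring a_i, parks under the 1-Naples
  rule exactly where a classical car preferring b_i parks: if a_i is occupied and equals an earlier
  b_j, backing up to a_i - 1 = b_i is what the classical car does; otherwise a_i - 1 is occupied
  as well and both cars drive east from a_i.\<close>

fun T_from :: "nat list \<Rightarrow> nat list \<Rightarrow> nat list" where
  "T_from bs [] = []"
| "T_from bs (a # as) =
     (let b = (if a \<noteq> 1 \<and> a \<in> set bs then a - 1 else a) in b # T_from (bs @ [b]) as)"

lemma T_aux_eq_append_T_from: "T_aux bs as = bs @ T_from bs as"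
  by (induction as arbitrary: bs) (auto simp: Let_def)

lemma T_eq_T_from: "T \<alpha> = T_from [] \<alpha>"
  by (simp add: T_def T_aux_eq_append_T_from)

lemma length_T_from: "length (T_from bs as) = length as"
  by (induction as arbitrary: bs) (auto simp: Let_def)

lemma set_T_from_subset: "set as \<subseteq> {1..n} \<Longrightarrow> set (T_from bs as) \<subseteq> {1..n}"
  by (induction as arbitrary: bs) (auto simp: Let_def)

lemma T_in_PP: "\<alpha> \<in> PP n \<Longrightarrow> T \<alpha> \<in> PP n"
  unfolding PP_def T_eq_T_from using length_T_from set_T_from_subset by blast

definition occupied_covered :: "nat set \<Rightarrow> nat list \<Rightarrow> bool" where
  "occupied_covered occ bs \<longleftrightarrow>
     set bs \<subseteq> occ \<and> (\<forall>s\<in>occ. s \<in> set bs \<or> (2 \<le> s \<and> s - 1 \<in> occ))"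

lemma find_upt_Some:
  assumes "find P [l..<m] = Some s"
  shows "l \<le> s \<and> s < m \<and> P s \<and> (\<forall>x. l \<le> x \<and> x < s \<longrightarrow> \<not> P x)"
proof -
  obtain i where i: "i < m - l" "P (l + i)" "s = l + i" "\<forall>j<i. \<not> P (l + j)"
    using assms by (auto simp: find_Some_iff)
  have "\<not> P x" if "l \<le> x" "x < s" for x
    using i(3,4) that by (metis add_diff_inverse_nat add_less_cancel_left not_le)
  then show ?thesis using i by auto
qed

lemma find_east_after_occupied:
  assumes "a \<in> occ" "1 \<le> a" "find (\<lambda>s. s \<notin> occ) [a+1..<n+1] = Some s"
  shows "2 \<le> s \<and> s - 1 \<in> occ"
proof -
  have "a + 1 \<le> s" and gap: "\<forall>x. a + 1 \<le> x \<and> x < s \<longrightarrow> x \<in> occ"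
    using find_upt_Some[OF assms(3)] by auto
  moreover have "s - 1 \<in> occ"
    using assms(1) gap \<open>a + 1 \<le> s\<close> by (cases "s - 1 = a") auto
  ultimately show ?thesis using assms(2) by auto
qed

lemma find_east_from_occupied:
  "a \<in> occ \<Longrightarrow> find (\<lambda>s. s \<notin> occ) [a..<n+1] = find (\<lambda>s. s \<notin> occ) [a+1..<n+1]"
  by (cases "a < n + 1"; cases "a = n") (auto simp: upt_conv_Cons)

lemma naples_spot_0:
  "naples_spot n 0 occ a =
     (if a \<notin> occ then Some a else find (\<lambda>s. s \<notin> occ) [a+1..<n+1])"
  by (auto simp: naples_spot_def)

lemma naples_spot_1:
  "naples_spot n 1 occ a =
     (if a \<notin> occ then Some a
      else if 1 < a \<and> a - 1 \<notin> occ then Some (a - 1)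
      else find (\<lambda>s. s \<notin> occ) [a+1..<n+1])"
  by (auto simp: naples_spot_def)

(* simp normalises the numeral 1 to Suc 0 inside some goals *)
lemmas naples_spot_Suc_0 = naples_spot_1[unfolded One_nat_def]

lemma naples_spot_1_eq_naples_spot_0:
  assumes inv: "occupied_covered occ bs" and "1 \<le> a"
    and b: "b = (if a \<noteq> 1 \<and> a \<in> set bs then a - 1 else a)"
  shows "naples_spot n 1 occ a = naples_spot n 0 occ b"
proof (cases "a \<in> occ")
  case False
  with inv have "a \<notin> set bs" by (auto simp: occupied_covered_def)
  with False b show ?thesis by (simp add: naples_spot_0 naples_spot_Suc_0)
next
  case a_occ: True
  show ?thesis
  proof (cases "a \<noteq> 1 \<and> a \<in> set bs")
    case True
    with b \<open>1 \<le> a\<close> have "b = a - 1" "b + 1 = a" by auto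
    then show ?thesis
      using a_occ True find_east_from_occupied[of a occ n]
      by (cases "b \<in> occ") (auto simp: naples_spot_0 naples_spot_Suc_0 simp del: upt_Suc)
  next
    case False
    with b have "b = a" by auto
    moreover have "a - 1 \<in> occ" if "a \<noteq> 1"
      using inv a_occ False that by (auto simp: occupied_covered_def)
    ultimately show ?thesis
      using a_occ by (cases "a = 1") (auto simp: naples_spot_0 naples_spot_Suc_0)
  qed
qed

lemma occupied_covered_naples_spot_0:
  assumes inv: "occupied_covered occ bs" and "1 \<le> b"
    and spot: "naples_spot n 0 occ b = Some s"
  shows "occupied_covered (insert s occ) (bs @ [b])"
proof (cases "b \<in> occ")
  case False
  with spot have "s = b" by (simp add: naples_spot_0)
  with inv show ?thesis by (auto simp: occupied_covered_def)
next
  case True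
  with spot have "2 \<le> s \<and> s - 1 \<in> occ"
    using find_east_after_occupied[OF True \<open>1 \<le> b\<close>] by (simp add: naples_spot_0)
  with inv True show ?thesis by (auto simp: occupied_covered_def)
qed

lemma naples_run_1_eq_naples_run_0_T_from:
  assumes "occupied_covered occ bs" "set as \<subseteq> {1..n}"
  shows "naples_run n 1 as occ = naples_run n 0 (T_from bs as) occ"
  using assms
proof (induction as arbitrary: bs occ)
  case Nil
  then show ?case by simp
next
  case (Cons a as)
  define b where "b = (if a \<noteq> 1 \<and> a \<in> set bs then a - 1 else a)"
  have "1 \<le> a" "1 \<le> b" using Cons.prems by (auto simp: b_def)
  have T_from_Cons: "T_from bs (a # as) = b # T_from (bs @ [b]) as"
    by (simp add: b_def Let_def)
  have spot: "naples_spot n 1 occ a = naples_spot n 0 occ b"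
    using naples_spot_1_eq_naples_spot_0[OF Cons.prems(1) \<open>1 \<le> a\<close> b_def] .
  show ?case
  proof (cases "naples_spot n 0 occ b")
    case None
    then show ?thesis using spot T_from_Cons by (simp del: T_from.simps)
  next
    case (Some s)
    with Cons.prems have "occupied_covered (insert s occ) (bs @ [b])"
      using occupied_covered_naples_spot_0 \<open>1 \<le> b\<close> by blast
    then show ?thesis
      using Cons.IH Cons.prems(2) Some spot T_from_Cons by (simp del: T_from.simps)
  qed
qed

theorem theorem1p2:
  fixes n :: nat and \<alpha> :: "nat list"
  assumes "\<alpha> \<in> PP n"
  shows "\<alpha> \<in> PF n 1 \<longleftrightarrow> T \<alpha> \<in> PF n 0"
proof -
  have "occupied_covered {} []" by (simp add: occupied_covered_def)
  moreover have "set \<alpha> \<subseteq> {1..n}" using assms by (simp add: PP_def)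
  ultimately have "naples_run n 1 \<alpha> {} = naples_run n 0 (T \<alpha>) {}"
    unfolding T_eq_T_from by (rule naples_run_1_eq_naples_run_0_T_from)
  then show ?thesis using assms T_in_PP by (auto simp: PF_def)
qed

end
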